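(* (i) For any positive integers $v_1, v_2$, either $\mathrm{ML}(v_1,v_2)=\frac{s}{2s+1}$ for some $s\in\mathbb{N}$, or $\mathrm{ML}(v_1,v_2)=\frac12$. (ii) For any positive integers $v_1,v_2,v_3$, either $\mathrm{ML}(v_1,v_2,v_3)=\frac{s}{3s+1}$ for some $s\in\mathbb{N}$, or $\mathrm{ML}(v_1,v_2,v_3)\ge \frac13$.
   Context: For a real number $x$, $\Vert x\Vert$ denotes the distance from $x$ to the nearest integer. For positive integers $v_1,\ldots,v_n$, the maximum loneliness is $\mathrm{ML}(v_1,\ldots,v_n)=\max_{t\in\mathbb{R}}\min_{1\le i\le n}\Vert t v_i\Vert$. Here $\mathbb{N}=\{1,2,3,\ldots\}$. *)

theory Defs
  imports "HOL-Analysis.Analysis"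
begin

definition dist_int :: "real \<Rightarrow> real" where
  "dist_int x = min (x - of_int \<lfloor>x\<rfloor>) (of_int \<lceil>x\<rceil> - x)"

text \<open>The maximum is attained (continuous periodic function), so Sup equals max.\<close>
definition max_loneliness :: "nat list \<Rightarrow> real" where
  "max_loneliness vs = (SUP t \<in> (UNIV::real set). Min ((\<lambda>v. dist_int (t * real v)) ` set vs))"

end

theory Submission
  imports Defs "HOL-Number_Theory.Cong"
begin

text \<open>
  Let \<open>\<delta> < 1/2\<close> be the maximum of \<open>L(t) = min\<^sub>v \<parallel>t v\<parallel>\<close>, attained at \<open>t\<^sub>0\<close>. If no speed
  had \<open>t\<^sub>0 v \<equiv> \<delta> (mod 1)\<close>, a small shift of \<open>t\<^sub>0\<close> to the right would raise every distance equal
  to \<open>\<delta>\<close> and keep the others above \<open>\<delta>\<close>; symmetrically for \<open>-\<delta>\<close> and shifts to the left. So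
  \<open>t\<^sub>0 p \<equiv> \<delta>\<close> and \<open>t\<^sub>0 q \<equiv> -\<delta>\<close> for two speeds \<open>p, q\<close>, whence \<open>t\<^sub>0 = K/Q\<close> with \<open>Q = p + q\<close>
  and \<open>\<delta> = r/Q\<close> with \<open>r \<equiv> K p (mod Q)\<close>. Evaluating \<open>L\<close> at the multiples \<open>m t\<^sub>0\<close> turns
  maximality into a statement about residues modulo \<open>Q\<close>: with two speeds no multiple of \<open>r\<close> is
  more than \<open>r\<close> away from \<open>0\<close>; with a third speed \<open>c\<close> and \<open>w = K c\<close>, no \<open>m\<close> moves \<open>m r\<close> more
  than \<open>r\<close> away while keeping \<open>m w\<close> at least \<open>r\<close> away, since \<open>m t\<^sub>0\<close> would then be a maximizer
  at which only \<open>c\<close> attains \<open>\<delta>\<close>. Modular inverses turn any violation into an explicit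
  multiplier, so after cancelling common factors \<open>Q = 2r + 1\<close>, respectively \<open>Q = 3r + 1\<close>
  when \<open>\<delta> < 1/3\<close>.
\<close>

section \<open>Distance to the nearest multiple of an integer\<close>

definition mod_dist :: "int \<Rightarrow> int \<Rightarrow> int" where
  "mod_dist Q x = min (x mod Q) (Q - x mod Q)"

lemma mod_dist_cong: "[x = y] (mod Q) \<Longrightarrow> mod_dist Q x = mod_dist Q y"
  by (simp add: mod_dist_def cong_def)

lemma mod_dist_uminus: "0 < Q \<Longrightarrow> mod_dist Q (- x) = mod_dist Q x"
  by (auto simp: mod_dist_def zmod_zminus1_eq_if)

lemma mod_dist_mult_complement:
  assumes "0 < a + b"
  shows "mod_dist (a + b) (x * b) = mod_dist (a + b) (x * a)"
proof -
  have "x * b - - (x * a) = (a + b) * x"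
    by (simp add: algebra_simps)
  then have "[x * b = - (x * a)] (mod a + b)"
    unfolding cong_iff_dvd_diff by simp
  then show ?thesis
    using assms by (metis mod_dist_cong mod_dist_uminus)
qed

lemma mod_dist_eq_min: "0 \<le> x \<Longrightarrow> x < Q \<Longrightarrow> mod_dist Q x = min x (Q - x)"
  by (simp add: mod_dist_def)

lemma mod_dist_mult_mult: "0 < g \<Longrightarrow> mod_dist (g * Q) (g * x) = g * mod_dist Q x"
  by (simp add: mod_dist_def mod_mult_mult1 min_mult_distrib_left right_diff_distrib)

lemma exists_least_multiple_ge:
  fixes e r :: int
  assumes "0 < e" "0 < r"
  obtains k where "1 \<le> k" "r \<le> k * e" "(k - 1) * e < r"
proof
  define k where "k = (r - 1) div e + 1"
  have "r - 1 = e * (k - 1) + (r - 1) mod e"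
    unfolding k_def by simp
  moreover have "0 \<le> (r - 1) mod e" "(r - 1) mod e < e"
    using assms by simp_all
  ultimately show "r \<le> k * e" "(k - 1) * e < r"
    by (simp_all add: algebra_simps)
  show "1 \<le> k"
    unfolding k_def using assms by (simp add: pos_imp_zdiv_nonneg_iff)
qed

lemma separating_multiplier_pred:
  fixes d r Q :: int
  assumes d: "2 \<le> d" "d \<le> r" and Q: "3 * r + 2 \<le> Q"
  shows "\<exists>k. r < mod_dist Q (k * d) \<and> r \<le> mod_dist Q (k * (d - 1))"
proof -
  obtain k where k: "1 \<le> k" "r \<le> k * (d - 1)" "(k - 1) * (d - 1) < r"
    using exists_least_multiple_ge[of "d - 1" r] d by auto
  have "(k - 1) * (d - 1) = (k - 2) * (d - 2) + k + d - 3"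
    by (simp add: algebra_simps)
  moreover have "k \<noteq> 1"
    using k d by auto
  then have "0 \<le> (k - 2) * (d - 2)"
    using k d by simp
  ultimately have "k * d \<le> 2 * r"
    using k(3) by (simp add: algebra_simps)
  moreover have "r < k * d"
    using k by (simp add: algebra_simps)
  ultimately show ?thesis
    using k Q by (intro exI[of _ k]) (simp add: mod_dist_eq_min algebra_simps)
qed

lemma separating_multiplier_succ:
  fixes d r Q :: int
  assumes d: "1 \<le> d" "d \<le> r" and Q: "3 * r + 2 \<le> Q"
  shows "\<exists>k. r < mod_dist Q (k * d) \<and> r \<le> mod_dist Q (k * (d + 1))"
proof -
  obtain k where k: "1 \<le> k" "r + 1 \<le> k * d" "(k - 1) * d < r + 1"
    using exists_least_multiple_ge[of d "r + 1"] d by auto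
  have "(k - 1) * d = (k - 2) * (d - 1) + k + d - 2"
    by (simp add: algebra_simps)
  moreover have "k \<noteq> 1"
    using k d by auto
  then have "0 \<le> (k - 2) * (d - 1)"
    using k d by simp
  ultimately have "k * (d + 1) \<le> 2 * r + 2" "k * d \<le> 2 * r"
    using k(3) d by (simp_all add: algebra_simps)
  then show ?thesis
    using k Q by (intro exI[of _ k]) (simp add: mod_dist_eq_min algebra_simps)
qed

lemma exists_multiplier_cong:
  fixes r h Q a :: int
  assumes "coprime r h" "h dvd Q"
  obtains m where "[m * r = Q div h * a] (mod Q)" "Q div h dvd m"
proof -
  obtain j where j: "[r * j = 1] (mod h)"
    using cong_solve_coprime_int[OF assms(1)] by blast
  have "[Q div h * (r * j) = Q div h * 1] (mod Q div h * h)"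
    using cong_cmult_leftI[OF j] .
  then have "[Q div h * (r * j) * a = Q div h * a] (mod Q)"
    using assms(2) cong_scalar_right by fastforce
  then have "[(Q div h * a * j) * r = Q div h * a] (mod Q)"
    by (simp add: ac_simps)
  then show ?thesis
    by (rule that) simp
qed

lemma separating_multiplier_common_factor:
  fixes r w Q h :: int
  assumes r: "0 < r" "3 * r < Q"
    and h: "2 \<le> h" "h dvd r + w" "h dvd Q" "coprime r h"
  shows "\<exists>m. r < mod_dist Q (m * r) \<and> r \<le> mod_dist Q (m * w)"
proof -
  define e where "e = Q div h"
  define a where "a = h div 2"
  have Q: "Q = e * h"
    using h(3) by (simp add: e_def)
  moreover have "0 < Q"
    using r by simp
  ultimately have "0 < e"
    using h(1) by (simp add: zero_less_mult_iff)
  moreover have "h \<le> 3 * a" "2 * a \<le> h" "0 \<le> a"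
    using h(1) by (simp_all add: a_def)
  ultimately have ea: "Q \<le> 3 * (e * a)" "2 * (e * a) \<le> Q" "0 \<le> e * a"
    unfolding Q by (simp_all add: mult.left_commute)
  \<comment> \<open>\<open>m r \<equiv> e a\<close> lies between \<open>Q/3\<close> and \<open>Q/2\<close>, and \<open>m (r + w) \<equiv> 0\<close> makes \<open>m w \<equiv> - m r\<close>.\<close>
  obtain m where m: "[m * r = e * a] (mod Q)" "e dvd m"
    using exists_multiplier_cong[OF h(4) h(3)] e_def by blast
  have mr: "mod_dist Q (m * r) = e * a"
    using mod_dist_cong[OF m(1)] ea r by (simp add: mod_dist_eq_min)
  have "Q dvd m * (r + w)"
    unfolding Q using m(2) h(2) by (rule mult_dvd_mono)
  then have "[m * w = - (m * r)] (mod Q)"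
    by (simp add: cong_iff_dvd_diff algebra_simps)
  then have "mod_dist Q (m * w) = mod_dist Q (m * r)"
    using r by (simp add: mod_dist_cong mod_dist_uminus)
  then show ?thesis
    using mr ea r by (intro exI[of _ m]) simp
qed

lemma separating_multiplier_residue:
  fixes r \<rho> Q :: int
  assumes r: "0 < r" "3 * r + 2 \<le> Q" and \<rho>: "0 \<le> \<rho>" "\<rho> < Q" "\<rho> \<noteq> 0" "\<rho> \<noteq> 1"
  shows "\<exists>k. r < mod_dist Q (k * \<rho>) \<and> r \<le> mod_dist Q (k * (1 - \<rho>))"
proof -
  consider "r < \<rho> \<and> \<rho> < Q - r" | "2 \<le> \<rho> \<and> \<rho> \<le> r" | "Q - r \<le> \<rho>"
    using \<rho> by linarith
  then show ?thesis
  proof cases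
    case 1
    then have "r < mod_dist Q (1 * \<rho>)" "r \<le> mod_dist Q (\<rho> - 1)"
      using r by (simp_all add: mod_dist_eq_min)
    moreover have "mod_dist Q (1 * (1 - \<rho>)) = mod_dist Q (\<rho> - 1)"
      using mod_dist_uminus[of Q "\<rho> - 1"] r by simp
    ultimately show ?thesis
      by (intro exI[of _ 1]) simp
  next
    case 2
    then obtain k where k: "r < mod_dist Q (k * \<rho>)" "r \<le> mod_dist Q (k * (\<rho> - 1))"
      using separating_multiplier_pred[of \<rho> r Q] r by blast
    have "k * (1 - \<rho>) = - (k * (\<rho> - 1))"
      by (simp add: algebra_simps)
    then show ?thesis
      using k r by (auto simp: mod_dist_uminus)
  next
    case 3
    define d where "d = Q - \<rho>"
    have "1 \<le> d" "d \<le> r"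
      using 3 \<rho> by (simp_all add: d_def)
    then obtain k where k: "r < mod_dist Q (k * d)" "r \<le> mod_dist Q (k * (d + 1))"
      using separating_multiplier_succ r by blast
    have "[k * \<rho> = - (k * d)] (mod Q)" "[k * (1 - \<rho>) = k * (d + 1)] (mod Q)"
      unfolding cong_iff_dvd_diff by (simp_all add: d_def algebra_simps)
    then have "mod_dist Q (k * \<rho>) = mod_dist Q (k * d)"
      "mod_dist Q (k * (1 - \<rho>)) = mod_dist Q (k * (d + 1))"
      using r by (simp_all add: mod_dist_cong mod_dist_uminus)
    then show ?thesis
      using k by metis
  qed
qed

lemma separating_multiplier_coprime:
  fixes r w Q :: int
  assumes r: "0 < r" "3 * r + 2 \<le> Q" and w: "r \<le> mod_dist Q w"
    and cop: "coprime (r + w) Q"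
  shows "\<exists>m. r < mod_dist Q (m * r) \<and> r \<le> mod_dist Q (m * w)"
proof -
  \<comment> \<open>Multiplying by an inverse \<open>u\<close> of \<open>r + w\<close> normalises the pair \<open>(r, w)\<close> to \<open>(\<rho>, 1 - \<rho>)\<close>.\<close>
  obtain u where u: "[(r + w) * u = 1] (mod Q)"
    using cong_solve_coprime_int[OF cop] by blast
  define \<rho> where "\<rho> = (u * r) mod Q"
  have ur: "[k * u * r = k * \<rho>] (mod Q)" for k
    by (simp add: \<rho>_def cong_def mod_mult_right_eq mult.assoc)
  have uw: "[k * u * w = k * (1 - \<rho>)] (mod Q)" for k
  proof -
    have "[k * u * (r + w) = k] (mod Q)"
      using cong_scalar_left[OF u, of k] by (simp add: ac_simps)
    from cong_diff[OF this ur[of k]] show ?thesis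
      by (simp add: algebra_simps)
  qed
  have "coprime u Q"
    using u by (metis coprime_iff_invertible_int mult.commute)
  then have cancel: "[x = 0] (mod Q)" if "[u * x = u * 0] (mod Q)" for x
    using that cong_mult_lcancel by blast
  have "\<rho> \<noteq> 0"
  proof
    assume "\<rho> = 0"
    then have "Q dvd r"
      using cancel ur[of 1] cong_0_iff by fastforce
    then show False
      using r zdvd_imp_le by fastforce
  qed
  moreover have "\<rho> \<noteq> 1"
  proof
    assume "\<rho> = 1"
    then have "mod_dist Q w = mod_dist Q 0"
      using cancel uw[of 1] mod_dist_cong by fastforce
    then show False
      using w r by (simp add: mod_dist_def)
  qed
  moreover have "0 \<le> \<rho>" "\<rho> < Q"
    using r by (simp_all add: \<rho>_def)
  ultimately obtain k where "r < mod_dist Q (k * \<rho>)" "r \<le> mod_dist Q (k * (1 - \<rho>))"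
    using separating_multiplier_residue r by blast
  then show ?thesis
    using mod_dist_cong[OF ur[of k]] mod_dist_cong[OF uw[of k]] by (intro exI[of _ "k * u"]) simp
qed

lemma exists_separating_multiplier:
  fixes r w Q :: int
  assumes r: "0 < r" "3 * r + 2 \<le> Q" and w: "r \<le> mod_dist Q w"
    and g: "gcd r (gcd w Q) = 1"
  shows "\<exists>m. r < mod_dist Q (m * r) \<and> r \<le> mod_dist Q (m * w)"
proof (cases "coprime (r + w) Q")
  case True
  then show ?thesis
    using separating_multiplier_coprime r w by blast
next
  case False
  define h where "h = gcd (r + w) Q"
  have "h \<noteq> 1" "0 < h"
    using False r by (auto simp: h_def coprime_iff_gcd_eq_1)
  then have "2 \<le> h"
    by simp
  moreover have "coprime r h"
  proof (rule coprimeI)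
    fix c
    assume c: "c dvd r" "c dvd h"
    then have "c dvd r + w" "c dvd Q"
      by (auto simp: h_def intro: dvd_trans)
    then have "c dvd w"
      using c(1) by (metis add_diff_cancel_left' dvd_diff)
    then have "c dvd gcd r (gcd w Q)"
      using c(1) \<open>c dvd Q\<close> by simp
    then show "is_unit c"
      using g by simp
  qed
  ultimately show ?thesis
    using separating_multiplier_common_factor[of r Q h w] r by (simp add: h_def)
qed

lemma gcd3_factorization:
  fixes r w Q :: int
  assumes "r \<noteq> 0"
  obtains g r' w' Q' where "0 < g" "r = g * r'" "w = g * w'" "Q = g * Q'"
    "gcd r' (gcd w' Q') = 1"
proof -
  define g where "g = gcd r (gcd w Q)"
  have g: "0 < g"
    using assms by (simp add: g_def)
  have "g dvd r"
    by (simp add: g_def)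
  moreover have "g dvd w"
    unfolding g_def by (rule dvd_trans[OF gcd_dvd2 gcd_dvd1])
  moreover have "g dvd Q"
    unfolding g_def by (rule dvd_trans[OF gcd_dvd2 gcd_dvd2])
  ultimately obtain r' w' Q' where *: "r = g * r'" "w = g * w'" "Q = g * Q'"
    by (elim dvdE)
  have "g = gcd (g * r') (gcd (g * w') (g * Q'))"
    using g_def unfolding * .
  also have "\<dots> = g * gcd r' (gcd w' Q')"
    using g by (simp add: gcd_mult_left)
  finally show ?thesis
    using that[OF g *] g by simp
qed

lemma ratio_of_scaled:
  fixes g s :: int
  assumes "0 < g" "0 < s"
  shows "\<exists>s'::nat. 1 \<le> s' \<and>
    of_int (g * s) / of_int (g * (int n * s + 1)) = real s' / real (n * s' + 1)"
  using assms by (intro exI[of _ "nat s"]) simp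

lemma ratio_two_speeds:
  fixes r Q :: int
  assumes r: "0 < r" "2 * r < Q" and max: "\<forall>m. mod_dist Q (m * r) \<le> r"
  shows "\<exists>s::nat. 1 \<le> s \<and> of_int r / of_int Q = real s / real (2 * s + 1)"
proof -
  from r(1) have "r \<noteq> 0"
    by simp
  then obtain g r' w' Q' where g: "0 < g" and r': "r = g * r'" and w': "r = g * w'"
    and Q: "Q = g * Q'" and gcd: "gcd r' (gcd w' Q') = 1"
    by (rule gcd3_factorization)
  have "w' = r'"
    using g r' w' by simp
  then have "coprime r' Q'"
    using gcd by (simp add: coprime_iff_gcd_eq_1)
  moreover have bounds: "0 < r'" "2 * r' < Q'"
    using r unfolding r' Q using g by (simp_all add: zero_less_mult_iff mult_less_cancel_left_pos)
  ultimately obtain m where m: "[m * r' = Q' div 2] (mod Q')"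
    using exists_multiplier_cong[of r' Q' Q' "Q' div 2"] by auto
  have "mod_dist Q' (m * r') = Q' div 2"
    using mod_dist_cong[OF m] bounds by (simp add: mod_dist_eq_min)
  moreover have "mod_dist Q (m * r) = g * mod_dist Q' (m * r')"
    unfolding r' Q using mod_dist_mult_mult[OF g, of Q' "m * r'"] by (simp add: mult.left_commute)
  moreover have "mod_dist Q (m * r) \<le> g * r'"
    using max r' by blast
  ultimately have "Q' div 2 \<le> r'"
    using g by simp
  then have "Q' = int 2 * r' + 1"
    using bounds by linarith
  then show ?thesis
    using ratio_of_scaled[of g r' 2] g r' Q bounds by simp
qed

lemma ratio_three_speeds:
  fixes r w Q :: int
  assumes r: "0 < r" "3 * r < Q" and w: "r \<le> mod_dist Q w"
    and max: "\<forall>m. mod_dist Q (m * r) \<le> r \<or> mod_dist Q (m * w) < r"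
  shows "\<exists>s::nat. 1 \<le> s \<and> of_int r / of_int Q = real s / real (3 * s + 1)"
proof -
  from r(1) have "r \<noteq> 0"
    by simp
  then obtain g r' w' Q' where g: "0 < g" and r': "r = g * r'" and w': "w = g * w'"
    and Q: "Q = g * Q'" and gcd: "gcd r' (gcd w' Q') = 1"
    by (rule gcd3_factorization)
  have scale: "mod_dist Q (m * (g * x)) = g * mod_dist Q' (m * x)" for m x
    unfolding Q using mod_dist_mult_mult[OF g, of Q' "m * x"] by (simp add: mult.left_commute)
  have r'_pos: "0 < r'" and "3 * r' < Q'"
    using r unfolding r' Q using g by (simp_all add: zero_less_mult_iff mult_less_cancel_left_pos)
  moreover have "\<not> 3 * r' + 2 \<le> Q'"
  proof
    assume "3 * r' + 2 \<le> Q'"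
    moreover have "r' \<le> mod_dist Q' w'"
      using w scale[of 1 w'] g unfolding r' w' by simp
    ultimately obtain m where "r' < mod_dist Q' (m * r')" "r' \<le> mod_dist Q' (m * w')"
      using exists_separating_multiplier[OF r'_pos _ _ gcd] by blast
    then show False
      using max[rule_format, of m] scale[of m r'] scale[of m w'] g unfolding r' w' by simp
  qed
  ultimately have "Q' = int 3 * r' + 1"
    by simp
  then show ?thesis
    using ratio_of_scaled[of g r' 3] g r' Q r'_pos by simp
qed

section \<open>Distance to the nearest integer\<close>

lemma dist_int_frac: "dist_int x = min (frac x) (1 - frac x)"
proof (cases "x \<in> \<int>")
  case True
  then show ?thesis
    by (auto simp: dist_int_def frac_def elim: Ints_cases)
next
  case False
  then have "\<lceil>x\<rceil> = \<lfloor>x\<rfloor> + 1"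
    by (metis Ints_of_int ceiling_altdef)
  then show ?thesis
    by (simp add: dist_int_def frac_def)
qed

lemma dist_int_le: "dist_int x \<le> \<bar>x - of_int n\<bar>"
proof (cases "n \<le> \<lfloor>x\<rfloor>")
  case True
  then have "frac x \<le> x - of_int n"
    unfolding frac_def by linarith
  then show ?thesis
    unfolding dist_int_frac by linarith
next
  case False
  then have "1 - frac x \<le> of_int n - x"
    unfolding frac_def by linarith
  then show ?thesis
    unfolding dist_int_frac by linarith
qed

lemma dist_int_attained: "\<exists>n. dist_int x = \<bar>x - of_int n\<bar>"
proof (cases "frac x \<le> 1 - frac x")
  case True
  then have "dist_int x = \<bar>x - of_int \<lfloor>x\<rfloor>\<bar>"
    unfolding dist_int_frac by (simp add: frac_def)
  then show ?thesis
    by blast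
next
  case False
  then have "dist_int x = \<bar>x - of_int (\<lfloor>x\<rfloor> + 1)\<bar>"
    unfolding dist_int_frac by (simp add: frac_def)
  then show ?thesis
    by blast
qed

lemma dist_int_lipschitz: "\<bar>dist_int x - dist_int y\<bar> \<le> \<bar>x - y\<bar>"
proof -
  have "dist_int x \<le> \<bar>x - y\<bar> + dist_int y" for x y
  proof -
    obtain n where "dist_int y = \<bar>y - of_int n\<bar>"
      using dist_int_attained by blast
    moreover have "dist_int x \<le> \<bar>x - of_int n\<bar>"
      by (rule dist_int_le)
    ultimately show ?thesis
      by linarith
  qed
  from this[of x y] this[of y x] show ?thesis
    by linarith
qed

lemma dist_int_le_half: "dist_int x \<le> 1 / 2"
  unfolding dist_int_frac by linarith

lemma dist_int_uminus [simp]: "dist_int (- x) = dist_int x"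
proof (cases "x \<in> \<int>")
  case True
  then have "frac x = 0"
    by simp
  then show ?thesis
    using True by (simp add: dist_int_frac frac_neg \<open>frac x = 0\<close>)
next
  case False
  then show ?thesis
    by (simp add: dist_int_frac frac_neg min.commute)
qed

lemma dist_int_add_of_int [simp]: "dist_int (x + of_int n) = dist_int x"
  unfolding dist_int_frac by simp

lemma frac_of_int_divide:
  fixes x Q :: int
  assumes "0 < Q"
  shows "frac (of_int x / of_int Q :: real) = of_int (x mod Q) / of_int Q"
proof -
  have "(of_int x :: real) = of_int Q * of_int (x div Q) + of_int (x mod Q)"
    by (metis of_int_add of_int_mult div_mult_mod_eq mult.commute)
  then show ?thesis
    unfolding frac_def floor_divide_of_int_eq using assms by (simp add: field_simps)
qed

lemma dist_int_of_int_divide: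
  fixes x Q :: int
  assumes "0 < Q"
  shows "dist_int (of_int x / of_int Q) = of_int (mod_dist Q x) / of_int Q"
proof -
  have "1 - of_int (x mod Q) / of_int Q = (of_int (Q - x mod Q) :: real) / of_int Q"
    using assms by (simp add: field_simps)
  then show ?thesis
    using assms by (simp add: dist_int_frac frac_of_int_divide mod_dist_def of_int_min min_divide_distrib_right)
qed

definition loneliness :: "nat set \<Rightarrow> real \<Rightarrow> real" where
  "loneliness S t = Min ((\<lambda>v. dist_int (t * real v)) ` S)"

lemma max_loneliness_eq_Sup: "max_loneliness vs = Sup (range (loneliness (set vs)))"
  unfolding max_loneliness_def loneliness_def ..

lemma loneliness_le: "finite S \<Longrightarrow> v \<in> S \<Longrightarrow> loneliness S t \<le> dist_int (t * real v)"
  unfolding loneliness_def by simp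

lemma less_loneliness_iff:
  "finite S \<Longrightarrow> S \<noteq> {} \<Longrightarrow> c < loneliness S t \<longleftrightarrow> (\<forall>v\<in>S. c < dist_int (t * real v))"
  unfolding loneliness_def by simp

lemma le_loneliness_iff:
  "finite S \<Longrightarrow> S \<noteq> {} \<Longrightarrow> c \<le> loneliness S t \<longleftrightarrow> (\<forall>v\<in>S. c \<le> dist_int (t * real v))"
  unfolding loneliness_def by simp

lemma loneliness_attained:
  assumes "finite S" "S \<noteq> {}"
  obtains v where "v \<in> S" "loneliness S t = dist_int (t * real v)"
proof -
  have "loneliness S t \<in> (\<lambda>v. dist_int (t * real v)) ` S"
    unfolding loneliness_def using assms by (intro Min_in) auto
  then show ?thesis
    using that by blast
qed

lemma loneliness_add_of_int [simp]: "loneliness S (t + of_int n) = loneliness S t"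
proof -
  have "(t + of_int n) * real v = t * real v + of_int (n * int v)" for v
    by (simp add: algebra_simps)
  then have "dist_int ((t + of_int n) * real v) = dist_int (t * real v)" for v
    by (metis dist_int_add_of_int)
  then show ?thesis
    unfolding loneliness_def by simp
qed

lemma continuous_on_dist_int_mult: "continuous_on UNIV (\<lambda>t. dist_int (t * c))"
proof (rule lipschitz_on_continuous_on)
  show "lipschitz_on \<bar>c\<bar> UNIV (\<lambda>t. dist_int (t * c))"
  proof (rule lipschitz_onI)
    fix x y :: real
    have "\<bar>dist_int (x * c) - dist_int (y * c)\<bar> \<le> \<bar>x * c - y * c\<bar>"
      by (rule dist_int_lipschitz)
    also have "\<dots> = \<bar>c\<bar> * \<bar>x - y\<bar>"
      by (simp add: abs_mult left_diff_distrib[symmetric])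
    finally show "dist (dist_int (x * c)) (dist_int (y * c)) \<le> \<bar>c\<bar> * dist x y"
      by (simp add: dist_real_def)
  qed simp
qed

lemma continuous_on_loneliness:
  assumes "finite S" "S \<noteq> {}"
  shows "continuous_on UNIV (loneliness S)"
  using assms
proof (induction S rule: finite_ne_induct)
  case (singleton v)
  then show ?case
    unfolding loneliness_def using continuous_on_dist_int_mult by simp
next
  case (insert v S)
  then have "loneliness (insert v S) = (\<lambda>t. min (dist_int (t * real v)) (loneliness S t))"
    unfolding loneliness_def by auto
  then show ?case
    using insert continuous_on_dist_int_mult continuous_on_min by metis
qed

lemma loneliness_has_max:
  assumes "finite S" "S \<noteq> {}"
  obtains t0 where "\<forall>t. loneliness S t \<le> loneliness S t0"
proof -
  have "continuous_on {0..1} (loneliness S)"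
    using continuous_on_loneliness[OF assms] continuous_on_subset by blast
  then obtain t0 where "\<forall>t\<in>{0..1}. loneliness S t \<le> loneliness S t0"
    using continuous_attains_sup[of "{0..1::real}" "loneliness S"] by auto
  moreover have "loneliness S t = loneliness S (t + of_int (- \<lfloor>t\<rfloor>))" for t
    by (rule loneliness_add_of_int[symmetric])
  moreover have "t + of_int (- \<lfloor>t\<rfloor>) \<in> {0..1}" for t :: real
    using frac_lt_1[of t] by (simp add: frac_def less_imp_le)
  ultimately show ?thesis
    using that by metis
qed

lemma exists_loneliness_pos:
  assumes "finite S" "S \<noteq> {}" "\<forall>v\<in>S. 0 < v"
  shows "\<exists>t. 0 < loneliness S t"
proof
  define t where "t = 1 / (2 * real (Max S))"
  show "0 < loneliness S t"
  proof (subst less_loneliness_iff[OF assms(1,2)], intro ballI)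
    fix v
    assume v: "v \<in> S"
    then have "0 < v" "v \<le> Max S"
      using assms by simp_all
    then have "0 < t * real v" "t * real v \<le> 1 / 2"
      unfolding t_def by (simp_all add: field_simps)
    then show "0 < dist_int (t * real v)"
      by (simp add: dist_int_frac frac_eq)
  qed
qed

lemma max_loneliness_maximizer:
  assumes "vs \<noteq> []" "\<forall>v\<in>set vs. 0 < v"
  obtains t0 where "\<forall>t. loneliness (set vs) t \<le> loneliness (set vs) t0"
    "max_loneliness vs = loneliness (set vs) t0" "0 < loneliness (set vs) t0"
proof -
  have S: "finite (set vs)" "set vs \<noteq> {}"
    using assms(1) by simp_all
  obtain t0 where max: "\<forall>t. loneliness (set vs) t \<le> loneliness (set vs) t0"
    using loneliness_has_max[OF S] by blast
  then have "max_loneliness vs = loneliness (set vs) t0"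
    unfolding max_loneliness_eq_Sup by (intro cSup_eq_maximum) auto
  moreover have "0 < loneliness (set vs) t0"
    using exists_loneliness_pos[OF S assms(2)] max by (meson less_le_trans)
  ultimately show ?thesis
    using that max by blast
qed

section \<open>Maximizers\<close>

lemma exists_pos_mult_less:
  fixes g :: "nat \<Rightarrow> real"
  assumes "finite S" "\<forall>v\<in>S. 0 < g v"
  shows "\<exists>u>0. \<forall>v\<in>S. u * real v < g v"
proof -
  define \<eta> where "\<eta> = Min (insert 1 (g ` S))"
  have \<eta>: "0 < \<eta>" "\<forall>v\<in>S. \<eta> \<le> g v"
    using assms by (simp_all add: \<eta>_def)
  define u where "u = \<eta> / (2 * real (Max S + 1))"
  have u: "0 < u" "u * (2 * real (Max S + 1)) = \<eta>"
    using \<eta>(1) by (simp_all add: u_def)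
  have "u * real v < g v" if "v \<in> S" for v
  proof -
    have "real v \<le> real (Max S)"
      using assms(1) that by simp
    then have "u * real v < u * (2 * real (Max S + 1))"
      using u(1) by (intro mult_strict_left_mono) simp_all
    then show ?thesis
      using u(2) \<eta>(2) that by fastforce
  qed
  then show ?thesis
    using u(1) by blast
qed

lemma exists_loneliness_gt:
  assumes S: "finite S" "S \<noteq> {}" "\<forall>v\<in>S. 0 < v" and \<delta>: "\<delta> < 1 / 2"
    and touch: "\<forall>v\<in>S. \<delta> < dist_int (t * real v) \<or> frac (t * real v) = \<delta>"
  shows "\<exists>t'. \<delta> < loneliness S t'"
proof -
  define g where "g v = (if \<delta> < dist_int (t * real v)
    then min (dist_int (t * real v) - \<delta>) (1 - 2 * \<delta>) else 1 - 2 * \<delta>)" for v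
  have "0 < g v" for v
    using \<delta> by (simp add: g_def)
  then obtain u where u: "0 < u" "\<forall>v\<in>S. u * real v < g v"
    using exists_pos_mult_less[OF S(1), of g] by blast
  have "\<delta> < dist_int ((t + u) * real v)" if v: "v \<in> S" for v
  proof (cases "\<delta> < dist_int (t * real v)")
    case True
    then have "u * real v < dist_int (t * real v) - \<delta>"
      using bspec[OF u(2) v] by (simp add: g_def)
    moreover have "dist_int (t * real v) - dist_int ((t + u) * real v) \<le> u * real v"
      using dist_int_lipschitz[of "t * real v" "(t + u) * real v"] u(1)
      by (simp add: algebra_simps)
    ultimately show ?thesis
      by linarith
  next
    case False
    then have frac: "frac (t * real v) = \<delta>" and small: "u * real v < 1 - 2 * \<delta>"
      using touch bspec[OF u(2) v] v by (auto simp: g_def)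
    moreover have "0 \<le> \<delta>"
      using frac frac_ge_0 by metis
    ultimately have "frac (t * real v + u * real v) = \<delta> + u * real v"
      using u(1) S(3) v by (simp add: frac_add frac_eq)
    then show ?thesis
      using small u(1) v S(3) by (simp add: dist_int_frac distrib_right)
  qed
  then show ?thesis
    using S(1,2) by (auto simp: less_loneliness_iff)
qed

lemma exists_loneliness_gt':
  assumes S: "finite S" "S \<noteq> {}" "\<forall>v\<in>S. 0 < v" and \<delta>: "0 < \<delta>" "\<delta> < 1 / 2"
    and touch: "\<forall>v\<in>S. \<delta> < dist_int (t * real v) \<or> frac (t * real v) = 1 - \<delta>"
  shows "\<exists>t'. \<delta> < loneliness S t'"
proof (rule exists_loneliness_gt[OF S \<delta>(2)])
  show "\<forall>v\<in>S. \<delta> < dist_int (- t * real v) \<or> frac (- t * real v) = \<delta>"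
  proof
    fix v
    assume "v \<in> S"
    then consider "\<delta> < dist_int (t * real v)" | "frac (t * real v) = 1 - \<delta>"
      using touch by blast
    then show "\<delta> < dist_int (- t * real v) \<or> frac (- t * real v) = \<delta>"
    proof cases
      case 2
      then have "frac (- (t * real v)) = \<delta>"
        using \<delta> frac_non_zero[of "t * real v"] by simp
      then show ?thesis
        by simp
    qed simp
  qed
qed

lemma maximizer_fracs:
  assumes S: "finite S" "S \<noteq> {}" "\<forall>v\<in>S. 0 < v"
    and max: "\<forall>t. loneliness S t \<le> loneliness S t0"
    and \<delta>: "0 < loneliness S t0" "loneliness S t0 < 1 / 2"
  obtains p q where "p \<in> S" "q \<in> S"
    "frac (t0 * real p) = loneliness S t0" "frac (t0 * real q) = 1 - loneliness S t0"
proof -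
  let ?\<delta> = "loneliness S t0"
  have "\<not> (\<exists>t'. ?\<delta> < loneliness S t')"
    using max by (simp add: not_less)
  moreover have "?\<delta> < dist_int (t0 * real v) \<or> frac (t0 * real v) = ?\<delta> \<or>
      frac (t0 * real v) = 1 - ?\<delta>" if "v \<in> S" for v
    using loneliness_le[OF S(1) that, of t0] by (auto simp: dist_int_frac min_def)
  ultimately have "\<exists>p\<in>S. frac (t0 * real p) = ?\<delta>" "\<exists>q\<in>S. frac (t0 * real q) = 1 - ?\<delta>"
    using exists_loneliness_gt[OF S \<delta>(2), of t0] exists_loneliness_gt'[OF S \<delta>, of t0]
    by blast+
  then show ?thesis
    using that by blast
qed

lemma rational_of_frac_add_eq_1:
  assumes "frac (t * real p) + frac (t * real q) = 1" "0 < p + q"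
  shows "t = of_int (\<lfloor>t * real p\<rfloor> + \<lfloor>t * real q\<rfloor> + 1) / of_int (int p + int q)"
proof -
  have "t * real_of_int (int p + int q) = of_int (\<lfloor>t * real p\<rfloor> + \<lfloor>t * real q\<rfloor> + 1)"
    using assms(1) unfolding frac_def by (simp add: algebra_simps)
  moreover have "real_of_int (int p + int q) \<noteq> 0"
    using assms(2) by (simp add: add_nonneg_eq_0_iff)
  ultimately show ?thesis
    by (simp add: eq_divide_eq)
qed

lemma rational_maximizer:
  assumes S: "finite S" "S \<noteq> {}" "\<forall>v\<in>S. 0 < v"
    and max: "\<forall>t. loneliness S t \<le> loneliness S t0"
    and \<delta>: "0 < loneliness S t0" "loneliness S t0 < 1 / 2"
  obtains p q Q r K where "p \<in> S" "q \<in> S" "p \<noteq> q" "0 < Q"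
    "loneliness S t0 = of_int r / of_int Q"
    "\<And>m v. dist_int (of_int m * t0 * real v) = of_int (mod_dist Q (m * (K * int v))) / of_int Q"
    "\<And>m. mod_dist Q (m * (K * int p)) = mod_dist Q (m * r)"
    "\<And>m. mod_dist Q (m * (K * int q)) = mod_dist Q (m * r)"
proof -
  let ?\<delta> = "loneliness S t0"
  obtain p q where pq: "p \<in> S" "q \<in> S"
    and fp: "frac (t0 * real p) = ?\<delta>" and fq: "frac (t0 * real q) = 1 - ?\<delta>"
    using maximizer_fracs[OF S max \<delta>] by blast
  have "p \<noteq> q"
    using fp fq \<delta>(2) by auto
  define Q where "Q = int p + int q"
  define K where "K = \<lfloor>t0 * real p\<rfloor> + \<lfloor>t0 * real q\<rfloor> + 1"
  define r where "r = (K * int p) mod Q"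
  have "0 < p"
    using S(3) pq(1) by blast
  then have Q: "0 < Q"
    by (simp add: Q_def)
  have t0: "t0 = of_int K / of_int Q"
    using rational_of_frac_add_eq_1[of t0 p q] fp fq \<open>0 < p\<close> by (simp add: K_def Q_def)
  have "?\<delta> = frac (of_int (K * int p) / of_int Q)"
    using fp t0 by simp
  then have "?\<delta> = of_int r / of_int Q"
    unfolding r_def by (simp only: frac_of_int_divide[OF Q])
  moreover have "dist_int (of_int m * t0 * real v) = of_int (mod_dist Q (m * (K * int v))) / of_int Q"
    for m v
    using dist_int_of_int_divide[OF Q, of "m * (K * int v)"] t0 by (simp add: mult.assoc)
  moreover have p: "mod_dist Q (m * (K * int p)) = mod_dist Q (m * r)" for m
    by (rule mod_dist_cong) (simp add: r_def cong_def mod_mult_right_eq)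
  moreover have "mod_dist Q (m * (K * int q)) = mod_dist Q (m * r)" for m
    using mod_dist_mult_complement[of "int p" "int q" "m * K"] Q p[of m]
    by (simp add: Q_def mult.assoc)
  ultimately show ?thesis
    using that[OF pq \<open>p \<noteq> q\<close> Q] by blast
qed

lemma dist_int_eq_of_frac:
  "frac x = \<delta> \<or> frac x = 1 - \<delta> \<Longrightarrow> \<delta> \<le> 1 / 2 \<Longrightarrow> dist_int x = \<delta>"
  by (auto simp: dist_int_frac)

lemma maximizer_touching_pair:
  assumes S: "finite S" "S \<noteq> {}" "\<forall>v\<in>S. 0 < v"
    and max: "\<forall>t. loneliness S t \<le> loneliness S t0"
    and \<delta>: "0 < loneliness S t0" "loneliness S t0 < 1 / 2"
  obtains p q where "p \<in> S" "q \<in> S" "p \<noteq> q"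
    "dist_int (t0 * real p) = loneliness S t0" "dist_int (t0 * real q) = loneliness S t0"
proof -
  obtain p q where "p \<in> S" "q \<in> S"
    and "frac (t0 * real p) = loneliness S t0" "frac (t0 * real q) = 1 - loneliness S t0"
    using maximizer_fracs[OF S max \<delta>] by blast
  moreover from this have "p \<noteq> q"
    using \<delta>(2) by auto
  ultimately show ?thesis
    using that \<delta>(2) by (simp add: dist_int_eq_of_frac)
qed

section \<open>Two and three speeds\<close>

lemma card_le_2_eq_pair:
  assumes "finite S" "card S \<le> 2" "p \<in> S" "q \<in> S" "p \<noteq> q"
  shows "S = {p, q}"
  using card_seteq[of S "{p, q}"] assms by simp

lemma card_le_3_obtain_third:
  assumes "finite S" "card S \<le> 3" "p \<in> S" "q \<in> S" "p \<noteq> q"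
  obtains c where "c \<in> S" "S \<subseteq> {p, q, c}"
proof (cases "S \<subseteq> {p, q}")
  case True
  then show ?thesis
    using that assms(3) by blast
next
  case False
  then obtain c where "c \<in> S" "c \<notin> {p, q}"
    by blast
  moreover from this have "card {p, q, c} = 3"
    using assms(5) by auto
  then have "{p, q, c} = S"
    using card_seteq[of S "{p, q, c}"] assms \<open>c \<in> S\<close> by simp
  ultimately show ?thesis
    using that by blast
qed

lemma maximizer_third_speed_below:
  assumes S: "finite S" "S \<noteq> {}" "\<forall>v\<in>S. 0 < v" "S \<subseteq> {p, q, c}"
    and max: "\<forall>t. loneliness S t \<le> loneliness S t0"
    and \<delta>: "0 < loneliness S t0" "loneliness S t0 < 1 / 2"
    and far: "loneliness S t0 < dist_int (T * real p)" "loneliness S t0 < dist_int (T * real q)"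
  shows "dist_int (T * real c) < loneliness S t0"
proof (rule ccontr)
  let ?\<delta> = "loneliness S t0"
  assume "\<not> ?thesis"
  then have "?\<delta> \<le> loneliness S T"
    using S far by (auto simp: le_loneliness_iff less_imp_le)
  then have T: "loneliness S T = ?\<delta>"
    using max by (simp add: order_antisym)
  have only_c: "v = c" if "v \<in> S" "dist_int (T * real v) = ?\<delta>" for v
    using that S(4) far by auto
  obtain p' q' where "p' \<in> S" "q' \<in> S" "p' \<noteq> q'"
    "dist_int (T * real p') = ?\<delta>" "dist_int (T * real q') = ?\<delta>"
    using maximizer_touching_pair[OF S(1-3), of T] max \<delta> unfolding T by blast
  then show False
    using only_c by blast
qed

lemma maximizer_value_two_speeds:
  assumes S: "finite S" "S \<noteq> {}" "\<forall>v\<in>S. 0 < v" "card S \<le> 2"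
    and max: "\<forall>t. loneliness S t \<le> loneliness S t0"
    and \<delta>: "0 < loneliness S t0" "loneliness S t0 < 1 / 2"
  shows "\<exists>s::nat. 1 \<le> s \<and> loneliness S t0 = real s / real (2 * s + 1)"
proof -
  obtain p q Q r K where pq: "p \<in> S" "q \<in> S" "p \<noteq> q" and Q: "0 < Q"
    and \<delta>r: "loneliness S t0 = of_int r / of_int Q"
    and dist: "\<And>m v. dist_int (of_int m * t0 * real v) = of_int (mod_dist Q (m * (K * int v))) / of_int Q"
    and p: "\<And>m. mod_dist Q (m * (K * int p)) = mod_dist Q (m * r)"
    and q: "\<And>m. mod_dist Q (m * (K * int q)) = mod_dist Q (m * r)"
    by (rule rational_maximizer[OF S(1-3) max \<delta>]) (rule that)
  have "S = {p, q}"
    by (rule card_le_2_eq_pair[OF S(1,4) pq])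
  have "mod_dist Q (m * r) \<le> r" for m
  proof -
    obtain v where v: "v \<in> S" "loneliness S (of_int m * t0) = dist_int (of_int m * t0 * real v)"
      by (rule loneliness_attained[OF S(1,2)])
    have "dist_int (of_int m * t0 * real v) = of_int (mod_dist Q (m * r)) / of_int Q"
      using v(1) \<open>S = {p, q}\<close> by (auto simp: dist p q)
    then have "of_int (mod_dist Q (m * r)) / of_int Q \<le> (of_int r / of_int Q :: real)"
      using spec[OF max, of "of_int m * t0"] v(2) \<delta>r by simp
    then show ?thesis
      using Q by (simp add: divide_le_cancel)
  qed
  moreover have "0 < r" "2 * r < Q"
    using \<delta> Q unfolding \<delta>r by (simp_all add: field_simps)
  ultimately obtain s :: nat where "1 \<le> s" "of_int r / of_int Q = real s / real (2 * s + 1)"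
    using ratio_two_speeds[of r Q] by blast
  then show ?thesis
    using \<delta>r by auto
qed

lemma maximizer_value_three_speeds:
  assumes S: "finite S" "S \<noteq> {}" "\<forall>v\<in>S. 0 < v" "card S \<le> 3"
    and max: "\<forall>t. loneliness S t \<le> loneliness S t0"
    and \<delta>: "0 < loneliness S t0" "loneliness S t0 < 1 / 3"
  shows "\<exists>s::nat. 1 \<le> s \<and> loneliness S t0 = real s / real (3 * s + 1)"
proof -
  let ?\<delta> = "loneliness S t0"
  have \<delta>': "0 < ?\<delta>" "?\<delta> < 1 / 2"
    using \<delta> by simp_all
  obtain p q Q r K where pq: "p \<in> S" "q \<in> S" "p \<noteq> q" and Q: "0 < Q"
    and \<delta>r: "?\<delta> = of_int r / of_int Q"
    and dist: "\<And>m v. dist_int (of_int m * t0 * real v) = of_int (mod_dist Q (m * (K * int v))) / of_int Q"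
    and p: "\<And>m. mod_dist Q (m * (K * int p)) = mod_dist Q (m * r)"
    and q: "\<And>m. mod_dist Q (m * (K * int q)) = mod_dist Q (m * r)"
    by (rule rational_maximizer[OF S(1-3) max \<delta>']) (rule that)
  obtain c where c: "c \<in> S" "S \<subseteq> {p, q, c}"
    by (rule card_le_3_obtain_third[OF S(1,4) pq])
  define w where "w = K * int c"
  have "dist_int (t0 * real c) = of_int (mod_dist Q w) / of_int Q"
    using dist[of 1 c] by (simp add: w_def)
  then have w: "r \<le> mod_dist Q w"
    using loneliness_le[OF S(1) c(1), of t0] Q by (simp add: \<delta>r divide_le_cancel)
  have "mod_dist Q (m * r) \<le> r \<or> mod_dist Q (m * w) < r" for m
  proof (cases "r < mod_dist Q (m * r)")
    case True
    then have "?\<delta> < dist_int (of_int m * t0 * real p)" "?\<delta> < dist_int (of_int m * t0 * real q)"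
      using Q by (simp_all add: dist p q \<delta>r divide_less_cancel)
    then have "dist_int (of_int m * t0 * real c) < ?\<delta>"
      by (rule maximizer_third_speed_below[OF S(1-3) c(2) max \<delta>'])
    then show ?thesis
      using Q by (simp add: dist \<delta>r w_def divide_less_cancel)
  qed simp
  moreover have "0 < r" "3 * r < Q"
    using \<delta> Q unfolding \<delta>r by (simp_all add: field_simps)
  ultimately obtain s :: nat where "1 \<le> s" "of_int r / of_int Q = real s / real (3 * s + 1)"
    using ratio_three_speeds[of r Q w] w by blast
  then show ?thesis
    using \<delta>r by auto
qed

lemma max_loneliness_two_speeds:
  assumes "0 < v1" "0 < v2"
  shows "(\<exists>s::nat. s \<ge> 1 \<and> max_loneliness [v1, v2] = real s / real (2 * s + 1))
    \<or> max_loneliness [v1, v2] = 1 / 2"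
proof -
  let ?S = "set [v1, v2]"
  have S: "finite ?S" "?S \<noteq> {}" "\<forall>v\<in>?S. 0 < v" "card ?S \<le> 2"
    using assms card_length[of "[v1, v2]"] by auto
  obtain t0 where max: "\<forall>t. loneliness ?S t \<le> loneliness ?S t0"
    and attained: "max_loneliness [v1, v2] = loneliness ?S t0" and \<delta>: "0 < loneliness ?S t0"
    using max_loneliness_maximizer[of "[v1, v2]"] S(3) by auto
  obtain v where "loneliness ?S t0 = dist_int (t0 * real v)"
    using loneliness_attained[OF S(1,2)] by metis
  then have "loneliness ?S t0 \<le> 1 / 2"
    using dist_int_le_half by simp
  then consider "loneliness ?S t0 = 1 / 2" | "loneliness ?S t0 < 1 / 2"
    by linarith
  then show ?thesis
  proof cases
    case 2
    then show ?thesis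
      using maximizer_value_two_speeds[OF S max \<delta>] unfolding attained by auto
  qed (simp add: attained)
qed

lemma max_loneliness_three_speeds:
  assumes "0 < v1" "0 < v2" "0 < v3"
  shows "(\<exists>s::nat. s \<ge> 1 \<and> max_loneliness [v1, v2, v3] = real s / real (3 * s + 1))
    \<or> max_loneliness [v1, v2, v3] \<ge> 1 / 3"
proof -
  let ?S = "set [v1, v2, v3]"
  have S: "finite ?S" "?S \<noteq> {}" "\<forall>v\<in>?S. 0 < v" "card ?S \<le> 3"
    using assms card_length[of "[v1, v2, v3]"] by auto
  obtain t0 where max: "\<forall>t. loneliness ?S t \<le> loneliness ?S t0"
    and attained: "max_loneliness [v1, v2, v3] = loneliness ?S t0" and \<delta>: "0 < loneliness ?S t0"
    using max_loneliness_maximizer[of "[v1, v2, v3]"] S(3) by auto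
  show ?thesis
  proof (cases "loneliness ?S t0 < 1 / 3")
    case True
    then show ?thesis
      using maximizer_value_three_speeds[OF S max \<delta>] unfolding attained by auto
  qed (simp add: attained)
qed

theorem theorem2p1:
  shows "(\<forall>v1 v2 :: nat. v1 > 0 \<longrightarrow> v2 > 0 \<longrightarrow>
            ((\<exists>s::nat. s \<ge> 1 \<and> max_loneliness [v1, v2] = real s / real (2 * s + 1))
             \<or> max_loneliness [v1, v2] = 1 / 2))
       \<and> (\<forall>v1 v2 v3 :: nat. v1 > 0 \<longrightarrow> v2 > 0 \<longrightarrow> v3 > 0 \<longrightarrow>
            ((\<exists>s::nat. s \<ge> 1 \<and> max_loneliness [v1, v2, v3] = real s / real (3 * s + 1))
             \<or> max_loneliness [v1, v2, v3] \<ge> 1 / 3))"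
  using max_loneliness_two_speeds max_loneliness_three_speeds by blast

end
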